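(* There exists no constant $\alpha>0$ such that the class of coverage functions has Shapley value that is $\alpha$-approximable from samples over the uniform distribution on $2^N$.
   Context: $N=\{1,\dots,n\}$. A coverage function is $C(S)=|\bigcup_{i\in S}T_i|$ for some sets $T_i\subseteq U$ of a universe $U$. The Shapley value is $\phi_i=\mathbb{E}_\sigma[C(S_{\sigma<i}\cup\{i\})-C(S_{\sigma<i})]$ for a uniformly random permutation $\sigma$ of $N$, $S_{\sigma<i}$ the players before $i$. An algorithm $\alpha$-approximates ($\alpha\in(0,1]$) the Shapley value of a family $\mathcal{C}$ over $\mathcal{D}$ if for all $C\in\mathcal{C}$ and $\delta>0$, given $\mathrm{poly}(n,1/\delta,1/(1-\alpha))$ i.i.d. samples $(S,C(S))$, $S\sim\mathcal{D}$, it computes $\tilde\phi$ such that with probability at least $1-\delta$ over samples and its choices, for all $i$: if $\phi_i\ge1/\mathrm{poly}(n)$ then $\alpha\phi_i\le\tilde\phi_i\le\phi_i/\alpha$; if $\phi_i\le-1/\mathrm{poly}(n)$ then $\phi_i/\alpha\le\tilde\phi_i\le\alpha\phi_i$; if $|\phi_i|<1/\mathrm{poly}(n)$ then $|\phi_i-\tilde\phi_i|=o(1)$. The Shapley value of $\mathcal{C}$ is $\alpha$-approximable from samples over $\mathcal{D}$ if such an algorithm exists. *)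

theory Defs
  imports "HOL-Probability.Probability" "HOL-Computational_Algebra.Polynomial"
begin

definition coverage :: "(nat \<Rightarrow> nat set) \<Rightarrow> nat set \<Rightarrow> real" where
  "coverage T S = real (card (\<Union>i\<in>S. T i))"

text \<open>Shapley value of player i for v over N = {1..n}: expectation over a uniformly random
  permutation (sigma j = position of player j) of the marginal contribution of i.\<close>
definition shapley :: "nat \<Rightarrow> (nat set \<Rightarrow> real) \<Rightarrow> nat \<Rightarrow> real" where
  "shapley n v i =
     (\<Sum>\<sigma>\<in>{\<sigma>. \<sigma> permutes {1..n}}.
        v ({j\<in>{1..n}. \<sigma> j < \<sigma> i} \<union> {i}) - v {j\<in>{1..n}. \<sigma> j < \<sigma> i})
     / real (card {\<sigma>. \<sigma> permutes {1..n}})"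

fun iid_list :: "'a pmf \<Rightarrow> nat \<Rightarrow> 'a list pmf" where
  "iid_list D 0 = return_pmf []"
| "iid_list D (Suc m) = bind_pmf D (\<lambda>x. bind_pmf (iid_list D m) (\<lambda>xs. return_pmf (x # xs)))"

definition samples :: "nat \<Rightarrow> (nat set \<Rightarrow> real) \<Rightarrow> nat \<Rightarrow> (nat set \<times> real) list pmf" where
  "samples n v m = iid_list (map_pmf (\<lambda>S. (S, v S)) (pmf_of_set (Pow {1..n}))) m"

definition is_poly_fun :: "(nat \<Rightarrow> real) \<Rightarrow> bool" where
  "is_poly_fun p \<longleftrightarrow> (\<exists>P :: real poly. \<forall>n. p n = poly P (real n))"

text \<open>Accuracy requirement for one player, with threshold t = 1/poly(n) and o(1)-error e.\<close>
definition good_estimate :: "real \<Rightarrow> real \<Rightarrow> real \<Rightarrow> real \<Rightarrow> real \<Rightarrow> bool" where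
  "good_estimate \<alpha> t e \<phi> \<phi>' \<longleftrightarrow>
     (\<phi> \<ge> t \<longrightarrow> \<alpha> * \<phi> \<le> \<phi>' \<and> \<phi>' \<le> \<phi> / \<alpha>) \<and>
     (\<phi> \<le> - t \<longrightarrow> \<phi> / \<alpha> \<le> \<phi>' \<and> \<phi>' \<le> \<alpha> * \<phi>) \<and>
     (\<bar>\<phi>\<bar> < t \<longrightarrow> \<bar>\<phi> - \<phi>'\<bar> \<le> e)"

text \<open>A (randomized) algorithm A n \<delta> samples returns a distribution over estimates;
  m n \<delta> is its number of samples.\<close>
definition alpha_approximates_coverage_shapley ::
  "real \<Rightarrow> (nat \<Rightarrow> real \<Rightarrow> (nat set \<times> real) list \<Rightarrow> (nat \<Rightarrow> real) pmf) \<Rightarrow> (nat \<Rightarrow> real \<Rightarrow> nat) \<Rightarrow> bool" where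
  "alpha_approximates_coverage_shapley \<alpha> A m \<longleftrightarrow>
     (\<exists>c k. \<forall>n \<delta>. n \<ge> 1 \<longrightarrow> \<delta> > 0 \<longrightarrow>
         real (m n \<delta>) \<le> c * (1 + real n + 1 / \<delta> + 1 / (1 - \<alpha>)) ^ k) \<and>
     (\<exists>p e. is_poly_fun p \<and> (\<forall>n\<ge>1. p n > 0) \<and> e \<longlonglongrightarrow> 0 \<and>
        (\<forall>n\<ge>1. \<forall>T. (\<forall>i. finite (T i)) \<longrightarrow> (\<forall>\<delta>>0.
           measure_pmf.prob (bind_pmf (samples n (coverage T) (m n \<delta>)) (A n \<delta>))
             {\<phi>'. \<forall>i\<in>{1..n}. good_estimate \<alpha> (1 / p n) (e n) (shapley n (coverage T) i) (\<phi>' i)}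
           \<ge> 1 - \<delta>)))"

definition coverage_shapley_approximable :: "real \<Rightarrow> bool" where
  "coverage_shapley_approximable \<alpha> \<longleftrightarrow> (\<exists>A m. alpha_approximates_coverage_shapley \<alpha> A m)"

end

(*
  Let every player of N = {1..n} cover the same K points, and compare this with the instance in
  which player 1 covers nothing.  Player 1's Shapley value is at least K / n! in the first instance
  and 0 in the second, so for K large a correct estimate must be above the error bound e(n) in one
  case and below it in the other.  Yet the two coverage functions differ only on the set {1},
  which a uniform sample hits with probability 2^-n; with polynomially many samples the algorithm
  sees identical data in both instances with probability above 1/2, so it cannot succeed in both
  with probability 3/4.
*)
theory Submission
  imports Defs "HOL-Real_Asymp.Real_Asymp"
begin

lemma measure_bind_pmf:
  "measure_pmf.prob (bind_pmf M f) X = (\<integral>x. measure_pmf.prob (f x) X \<partial>measure_pmf M)"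
  unfolding measure_pmf_bind
  by (rule measure_pmf.measure_bind[where N="count_space UNIV"])
     (auto simp: space_subprob_algebra measure_pmf_in_subprob_algebra
       prob_space_imp_subprob_space measure_pmf.prob_space_axioms)

lemma iid_list_map_pmf: "iid_list (map_pmf f D) m = map_pmf (map f) (iid_list D m)"
  by (induction m) (simp_all add: map_bind_pmf bind_map_pmf map_return_pmf)

lemma prob_iid_list_subset:
  "measure_pmf.prob (iid_list D m) {xs. set xs \<subseteq> G} = measure_pmf.prob D G ^ m"
proof (induction m)
  case 0
  then show ?case by simp
next
  case (Suc m)
  have step: "measure_pmf.prob (map_pmf ((#) x) (iid_list D m)) {xs. set xs \<subseteq> G}
      = indicator G x * measure_pmf.prob D G ^ m" for x
    using Suc.IH by (cases "x \<in> G") (simp_all add: vimage_def)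
  have "iid_list D (Suc m) = bind_pmf D (\<lambda>x. map_pmf ((#) x) (iid_list D m))"
    by (simp add: map_pmf_def)
  then have "measure_pmf.prob (iid_list D (Suc m)) {xs. set xs \<subseteq> G}
      = (\<integral>x. indicator G x * measure_pmf.prob D G ^ m \<partial>measure_pmf D)"
    by (simp only: measure_bind_pmf step)
  also have "\<dots> = measure_pmf.prob D G ^ Suc m"
    by simp
  finally show ?case .
qed

lemma prob_iid_list_not_subset_le:
  "measure_pmf.prob (iid_list D m) {xs. \<not> set xs \<subseteq> G} \<le> real m * measure_pmf.prob D (- G)"
proof -
  have "measure_pmf.prob (iid_list D m) {xs. \<not> set xs \<subseteq> G}
      = 1 - (1 - measure_pmf.prob D (- G)) ^ m"
    using measure_pmf.prob_compl[of "{xs. set xs \<subseteq> G}" "iid_list D m"]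
          measure_pmf.prob_compl[of G D]
    by (simp add: prob_iid_list_subset Compl_eq_Diff_UNIV set_diff_eq)
  also have "\<dots> \<le> real m * measure_pmf.prob D (- G)"
    using Bernoulli_inequality[of "- measure_pmf.prob D (- G)" m] by simp
  finally show ?thesis .
qed

text \<open>The two runs see the same data unless some sample falls outside G.\<close>
lemma prob_disjoint_outcomes_le:
  assumes agree: "\<And>x. x \<in> G \<Longrightarrow> g\<^sub>1 x = g\<^sub>2 x" and disjoint: "X \<inter> Y = {}"
  shows "measure_pmf.prob (bind_pmf (map_pmf (map g\<^sub>1) (iid_list D m)) f) X
       + measure_pmf.prob (bind_pmf (map_pmf (map g\<^sub>2) (iid_list D m)) f) Y
       \<le> 1 + real m * measure_pmf.prob D (- G)"
proof -
  let ?bad = "{xs. \<not> set xs \<subseteq> G}"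
  let ?h\<^sub>1 = "\<lambda>xs. measure_pmf.prob (f (map g\<^sub>1 xs)) X"
  let ?h\<^sub>2 = "\<lambda>xs. measure_pmf.prob (f (map g\<^sub>2 xs)) Y"
  have integrable_bounded: "integrable (measure_pmf (iid_list D m)) h"
    if "\<And>xs. \<bar>h xs\<bar> \<le> 2" for h :: "_ \<Rightarrow> real"
    using that by (intro measure_pmf.integrable_const_bound[where B=2]) auto
  have integrable: "integrable (measure_pmf (iid_list D m)) ?h\<^sub>1"
    "integrable (measure_pmf (iid_list D m)) ?h\<^sub>2"
    by (auto intro!: integrable_bounded order_trans[OF _ one_le_numeral])
  have pointwise: "?h\<^sub>1 xs + ?h\<^sub>2 xs \<le> 1 + indicator ?bad xs" for xs
  proof (cases "set xs \<subseteq> G")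
    case True
    then have "map g\<^sub>1 xs = map g\<^sub>2 xs"
      using agree by (auto intro: map_cong)
    then have "?h\<^sub>1 xs + ?h\<^sub>2 xs = measure_pmf.prob (f (map g\<^sub>1 xs)) (X \<union> Y)"
      using disjoint by (simp add: measure_pmf.finite_measure_Union del: map_eq_conv)
    then show ?thesis
      using measure_pmf.prob_le_1[of "f (map g\<^sub>1 xs)" "X \<union> Y"] True by simp
  next
    case False
    then show ?thesis
      using add_mono[OF measure_pmf.prob_le_1 measure_pmf.prob_le_1] by simp
  qed
  have "measure_pmf.prob (bind_pmf (map_pmf (map g\<^sub>1) (iid_list D m)) f) X
       + measure_pmf.prob (bind_pmf (map_pmf (map g\<^sub>2) (iid_list D m)) f) Y
       = (\<integral>xs. ?h\<^sub>1 xs + ?h\<^sub>2 xs \<partial>measure_pmf (iid_list D m))"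
    by (simp add: bind_map_pmf measure_bind_pmf Bochner_Integration.integral_add[OF integrable])
  also have "\<dots> \<le> (\<integral>xs. 1 + indicator ?bad xs \<partial>measure_pmf (iid_list D m))"
    by (rule integral_mono[OF Bochner_Integration.integrable_add[OF integrable] integrable_bounded
          pointwise]) (simp add: indicator_def)
  also have "\<dots> = 1 + measure_pmf.prob (iid_list D m) ?bad"
    by (subst Bochner_Integration.integral_add) (auto intro!: integrable_bounded simp: indicator_def)
  also have "\<dots> \<le> 1 + real m * measure_pmf.prob D (- G)"
    using prob_iid_list_not_subset_le[of D m G] by simp
  finally show ?thesis .
qed

lemma shapley_ge_first_marginal:
  assumes "mono v" "n \<ge> 1"
  shows "(v {1} - v {}) / fact n \<le> shapley n v 1"
proof -
  let ?perms = "{\<sigma>. \<sigma> permutes {1..n}}"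
  let ?marginal = "\<lambda>\<sigma>. v ({j\<in>{1..n}. \<sigma> j < \<sigma> 1} \<union> {1}) - v {j\<in>{1..n}. \<sigma> j < \<sigma> 1}"
  have "{j\<in>{1..n}. id j < id 1} = {}"
    by auto
  then have "v {1} - v {} = ?marginal id"
    by (simp only: Un_empty_left)
  also have "\<dots> \<le> sum ?marginal ?perms"
    using monoD[OF \<open>mono v\<close>, of _ "_ \<union> {1}"]
    by (intro member_le_sum) (auto simp: permutes_id finite_permutations simp del: id_apply)
  finally show ?thesis
    using card_permutations[of "{1..n}" n]
    unfolding shapley_def by (simp add: divide_right_mono)
qed

lemma mono_coverage:
  assumes "finite U" "\<And>i. T i \<subseteq> U"
  shows "mono (coverage T)"
  unfolding coverage_def
  using assms by (intro monoI of_nat_mono card_mono) (auto intro: finite_subset)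

lemma shapley_coverage_empty_player:
  assumes "T i = {}"
  shows "shapley n (coverage T) i = 0"
proof -
  have "(\<Union>j\<in>S \<union> {i}. T j) = (\<Union>j\<in>S. T j)" for S
    using assms by auto
  then show ?thesis
    unfolding shapley_def coverage_def by simp
qed

lemma shapley_coverage_const_ge:
  assumes "finite A" "n \<ge> 1"
  shows "real (card A) / fact n \<le> shapley n (coverage (\<lambda>_. A)) 1"
  using shapley_ge_first_marginal[OF mono_coverage[of A "\<lambda>_. A"] \<open>n \<ge> 1\<close>] \<open>finite A\<close>
  by (simp add: coverage_def)

lemma coverage_remove_player_eq:
  assumes "S \<noteq> {i}"
  shows "coverage ((\<lambda>_. A)(i := {})) S = coverage (\<lambda>_. A) S"
proof -
  have "(\<Union>j\<in>S. ((\<lambda>_. A)(i := {})) j) = (\<Union>j\<in>S. A)"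
    using assms by (auto simp: subset_singleton_iff)
  then show ?thesis
    unfolding coverage_def by simp
qed

lemma prob_coverage_samples_disjoint_le:
  assumes "X \<inter> Y = {}" "i \<in> {1..n}"
  shows "measure_pmf.prob (bind_pmf (samples n (coverage (\<lambda>_. A)) M) f) X
       + measure_pmf.prob (bind_pmf (samples n (coverage ((\<lambda>_. A)(i := {}))) M) f) Y
       \<le> 1 + real M / 2 ^ n"
proof -
  let ?U = "pmf_of_set (Pow {1..n})"
  have "Pow {1..n} \<inter> {{i}} = {{i}}"
    using assms(2) by auto
  then have "measure_pmf.prob ?U (- (- {{i}})) = 1 / 2 ^ n"
    by (subst measure_pmf_of_set) (auto simp: card_Pow)
  moreover have "measure_pmf.prob (bind_pmf (samples n (coverage (\<lambda>_. A)) M) f) X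
       + measure_pmf.prob (bind_pmf (samples n (coverage ((\<lambda>_. A)(i := {}))) M) f) Y
       \<le> 1 + real M * measure_pmf.prob ?U (- (- {{i}}))"
    unfolding samples_def iid_list_map_pmf
    by (rule prob_disjoint_outcomes_le) (auto simp: coverage_remove_player_eq assms(1))
  ultimately show ?thesis
    by simp
qed

lemma exists_poly_lt_power2: "\<exists>n\<ge>N. c * (real n + b) ^ k < 2 ^ n"
proof -
  have "((\<lambda>n::nat. c * (real n + b) ^ k / 2 ^ n) \<longlongrightarrow> 0) sequentially"
    by real_asymp
  then have "eventually (\<lambda>n. c * (real n + b) ^ k / 2 ^ n < 1 \<and> n \<ge> N) sequentially"
    by (intro eventually_conj order_tendstoD(2)[OF _ zero_less_one] eventually_ge_at_top)
  then obtain n where "c * (real n + b) ^ k / 2 ^ n < 1" "n \<ge> N"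
    using eventually_happens'[OF sequentially_bot] by blast
  then show ?thesis
    by (auto simp: divide_less_eq)
qed

lemma good_estimate_gt_error:
  assumes "0 < \<alpha>" "t \<le> \<phi>" "\<bar>e\<bar> < \<alpha> * \<phi>" "good_estimate \<alpha> t e \<phi> \<phi>'"
  shows "e < \<phi>'"
  using assms unfolding good_estimate_def by auto

lemma good_estimate_zero_le_error:
  assumes "0 < t" "good_estimate \<alpha> t e 0 \<phi>'"
  shows "\<phi>' \<le> e"
  using assms unfolding good_estimate_def by auto

lemma good_estimates_full_coverage_gt:
  assumes "0 < \<alpha>" "n \<ge> 1" "fact n * max t ((\<bar>\<epsilon>\<bar> + 1) / \<alpha>) \<le> real K"
  shows "{\<phi>'. \<forall>i\<in>{1..n}. good_estimate \<alpha> t \<epsilon> (shapley n (coverage (\<lambda>_. {0..<K})) i) (\<phi>' i)}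
    \<subseteq> {\<phi>'. \<epsilon> < \<phi>' 1}"
proof -
  let ?\<phi> = "shapley n (coverage (\<lambda>_. {0..<K})) 1"
  have "max t ((\<bar>\<epsilon>\<bar> + 1) / \<alpha>) \<le> real (card {0..<K}) / fact n"
    using assms(3) by (simp only: pos_le_divide_eq[OF fact_gt_zero] card_atLeastLessThan diff_zero mult.commute)
  also have "\<dots> \<le> ?\<phi>"
    using assms(2) by (intro shapley_coverage_const_ge) simp_all
  finally have "t \<le> ?\<phi>" and "\<bar>\<epsilon>\<bar> < \<alpha> * ?\<phi>"
    using assms(1) by (simp_all add: pos_divide_le_eq mult.commute)
  then show ?thesis
    using assms(1,2) by (auto intro: good_estimate_gt_error)
qed

lemma good_estimates_dummy_coverage_le:
  assumes "0 < t" "n \<ge> 1"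
  shows "{\<phi>'. \<forall>i\<in>{1..n}. good_estimate \<alpha> t \<epsilon> (shapley n (coverage ((\<lambda>_. A)(1 := {}))) i) (\<phi>' i)}
    \<subseteq> {\<phi>'. \<phi>' 1 \<le> \<epsilon>}"
proof -
  have "shapley n (coverage ((\<lambda>_. A)(1 := {}))) 1 = 0"
    by (rule shapley_coverage_empty_player) simp
  then show ?thesis
    using assms by (force intro: good_estimate_zero_le_error)
qed

lemma coverage_shapley_sample_lower_bound:
  assumes "0 < \<alpha>" "0 < t" "n \<ge> 1"
    and correct: "\<And>T. \<forall>i. finite (T i) \<Longrightarrow> 3/4 \<le> measure_pmf.prob
      (bind_pmf (samples n (coverage T) M) f)
      {\<phi>'. \<forall>i\<in>{1..n}. good_estimate \<alpha> t \<epsilon> (shapley n (coverage T) i) (\<phi>' i)}"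
  shows "2 ^ n \<le> 2 * real M"
proof -
  define K where "K = nat \<lceil>fact n * max t ((\<bar>\<epsilon>\<bar> + 1) / \<alpha>)\<rceil>"
  let ?full = "\<lambda>_::nat. {0..<K}" and ?dummy = "(\<lambda>_::nat. {0..<K})(1 := {})"
  let ?P = "\<lambda>T X. measure_pmf.prob (bind_pmf (samples n (coverage T) M) f) X"
  let ?good = "\<lambda>T. {\<phi>'. \<forall>i\<in>{1..n}. good_estimate \<alpha> t \<epsilon> (shapley n (coverage T) i) (\<phi>' i)}"
  have "3/4 \<le> ?P ?full (?good ?full)" and "3/4 \<le> ?P ?dummy (?good ?dummy)"
    by (rule correct, simp)+
  moreover have "?P ?full (?good ?full) \<le> ?P ?full {\<phi>'. \<epsilon> < \<phi>' 1}"
    using assms(1,3) by (intro measure_pmf.finite_measure_mono good_estimates_full_coverage_gt)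
      (simp_all add: K_def real_nat_ceiling_ge)
  moreover have "?P ?dummy (?good ?dummy) \<le> ?P ?dummy {\<phi>'. \<phi>' 1 \<le> \<epsilon>}"
    using assms(2,3) by (intro measure_pmf.finite_measure_mono good_estimates_dummy_coverage_le) simp_all
  moreover have "?P ?full {\<phi>'. \<epsilon> < \<phi>' 1} + ?P ?dummy {\<phi>'. \<phi>' 1 \<le> \<epsilon>} \<le> 1 + real M / 2 ^ n"
    using assms(3) by (intro prob_coverage_samples_disjoint_le) auto
  ultimately have "1/2 \<le> real M / 2 ^ n"
    by linarith
  then show ?thesis
    by (simp add: le_divide_eq)
qed

lemma alpha_approximates_coverage_shapleyE:
  assumes "alpha_approximates_coverage_shapley \<alpha> A m"
  obtains c k p e where
    "\<And>n \<delta>. n \<ge> 1 \<Longrightarrow> \<delta> > 0 \<Longrightarrow>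
      real (m n \<delta>) \<le> c * (1 + real n + 1 / \<delta> + 1 / (1 - \<alpha>)) ^ k"
    "\<And>n. n \<ge> 1 \<Longrightarrow> p n > 0"
    "\<And>n T \<delta>. n \<ge> 1 \<Longrightarrow> \<forall>i. finite (T i) \<Longrightarrow> \<delta> > 0 \<Longrightarrow>
      1 - \<delta> \<le> measure_pmf.prob (bind_pmf (samples n (coverage T) (m n \<delta>)) (A n \<delta>))
        {\<phi>'. \<forall>i\<in>{1..n}. good_estimate \<alpha> (1 / p n) (e n) (shapley n (coverage T) i) (\<phi>' i)}"
proof -
  from assms obtain c k p e where size:
    "\<forall>n \<delta>. n \<ge> 1 \<longrightarrow> \<delta> > 0 \<longrightarrow> real (m n \<delta>) \<le> c * (1 + real n + 1 / \<delta> + 1 / (1 - \<alpha>)) ^ k"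
    and pos: "\<forall>n\<ge>1. p n > 0"
    and correct: "\<forall>n\<ge>1. \<forall>T. (\<forall>i. finite (T i)) \<longrightarrow> (\<forall>\<delta>>0.
      1 - \<delta> \<le> measure_pmf.prob (bind_pmf (samples n (coverage T) (m n \<delta>)) (A n \<delta>))
        {\<phi>'. \<forall>i\<in>{1..n}. good_estimate \<alpha> (1 / p n) (e n) (shapley n (coverage T) i) (\<phi>' i)})"
    unfolding alpha_approximates_coverage_shapley_def by (elim conjE exE) assumption
  show thesis
    by (rule that[OF size[rule_format] pos[rule_format] correct[rule_format (no_asm)]])
qed

theorem theorem9:
  shows "\<not> (\<exists>\<alpha>::real. 0 < \<alpha> \<and> \<alpha> \<le> 1 \<and> coverage_shapley_approximable \<alpha>)"
proof
  assume "\<exists>\<alpha>::real. 0 < \<alpha> \<and> \<alpha> \<le> 1 \<and> coverage_shapley_approximable \<alpha>"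
  then obtain \<alpha> A m where "0 < \<alpha>" and approx: "alpha_approximates_coverage_shapley \<alpha> A m"
    unfolding coverage_shapley_approximable_def by blast
  obtain c k p e where sample_size: "\<And>n \<delta>. n \<ge> 1 \<Longrightarrow> \<delta> > 0 \<Longrightarrow>
      real (m n \<delta>) \<le> c * (1 + real n + 1 / \<delta> + 1 / (1 - \<alpha>)) ^ k"
    and p_pos: "\<And>n. n \<ge> 1 \<Longrightarrow> p n > 0"
    and correct: "\<And>n T \<delta>. n \<ge> 1 \<Longrightarrow> \<forall>i. finite (T i) \<Longrightarrow> \<delta> > 0 \<Longrightarrow>
      1 - \<delta> \<le> measure_pmf.prob (bind_pmf (samples n (coverage T) (m n \<delta>)) (A n \<delta>))
        {\<phi>'. \<forall>i\<in>{1..n}. good_estimate \<alpha> (1 / p n) (e n) (shapley n (coverage T) i) (\<phi>' i)}"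
    using approx by (rule alpha_approximates_coverage_shapleyE) blast
  obtain n where "n \<ge> 1" and "2 * c * (real n + (5 + 1 / (1 - \<alpha>))) ^ k < 2 ^ n"
    using exists_poly_lt_power2 by blast
  moreover have "real (m n (1/4)) \<le> c * (real n + (5 + 1 / (1 - \<alpha>))) ^ k"
    using sample_size[of n "1/4"] \<open>n \<ge> 1\<close> by (simp add: algebra_simps)
  moreover have "2 ^ n \<le> 2 * real (m n (1/4))"
  proof (rule coverage_shapley_sample_lower_bound[OF \<open>0 < \<alpha>\<close> _ \<open>n \<ge> 1\<close>])
    show "0 < 1 / p n"
      using p_pos[OF \<open>n \<ge> 1\<close>] by simp
    show "3/4 \<le> measure_pmf.prob (bind_pmf (samples n (coverage T) (m n (1/4))) (A n (1/4)))
      {\<phi>'. \<forall>i\<in>{1..n}. good_estimate \<alpha> (1 / p n) (e n) (shapley n (coverage T) i) (\<phi>' i)}"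
      if "\<forall>i. finite (T i)" for T
      using correct[of n T "1/4"] \<open>n \<ge> 1\<close> that by simp
  qed
  ultimately show False
    by linarith
qed

end
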